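(* Let $\mathcal{H}$ be a complex Hilbert space of finite dimension $n\ge2$ and $m\ge2$. Let $\mathcal{G}=(\{1,\dots,m\},E)$ be a connected undirected graph, and for each edge $(j,k)\in E$ let $U_{(j,k)}$ be the unitary on $\mathcal{H}^{\otimes m}$ swapping tensor factors $j$ and $k$. Let $q_0>0$ and $q_{j,k}>0$ for $(j,k)\in E$ with $q_0+\sum_{(j,k)\in E}q_{j,k}=1$, and define the map on operators of $\mathcal{H}^{\otimes m}$ $$\mathcal{E}(X)=q_0X+\sum_{(j,k)\in E}q_{j,k}\,U_{(j,k)}XU_{(j,k)}^\dagger.$$ Then the set of fixed points of $\mathcal{E}$ (operators $X$ with $\mathcal{E}(X)=X$) coincides with the set of permutation-invariant operators, i.e. those $X$ with $U_\pi X=XU_\pi$ for every permutation $\pi$ of $\{1,\dots,m\}$.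
   Context: For a permutation $\pi$ of $\{1,\dots,m\}$, $U_\pi$ denotes the unitary on $\mathcal{H}^{\otimes m}$ with $U_\pi(X_1\otimes\cdots\otimes X_m)U_\pi^\dagger=X_{\pi(1)}\otimes\cdots\otimes X_{\pi(m)}$ for all operators $X_i$ on $\mathcal{H}$; $U_{(j,k)}$ is $U_\pi$ for the transposition $\pi$ of $j$ and $k$. *)

theory Defs
  imports "HOL-Analysis.Analysis" "HOL-Combinatorics.Permutations"
begin

text \<open>H = complex^'n (dimension CARD('n)); the tensor power H^{\<otimes>m} has the
  standard basis indexed by multi-indices a :: 'm \<Rightarrow> 'n (tensor factors indexed
  by the finite type 'm, with CARD('m) = m).\<close>

type_synonym ('m, 'n) tens_op = "complex^('m \<Rightarrow> 'n)^('m \<Rightarrow> 'n)"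

definition adjoint_op :: "('m::finite, 'n::finite) tens_op \<Rightarrow> ('m, 'n) tens_op" where
  "adjoint_op A = (\<chi> i j. cnj (A $ j $ i))"

definition tensor_op :: "('m::finite \<Rightarrow> complex^'n^'n) \<Rightarrow> ('m, 'n::finite) tens_op" where
  "tensor_op Xs = (\<chi> a b. \<Prod>k\<in>UNIV. Xs k $ a k $ b k)"

text \<open>Permutation unitary: U_\<pi> e_b = e_{b \<circ> \<pi>}, so that
  U_\<pi> (X_1 \<otimes> ... \<otimes> X_m) U_\<pi>^\<dagger> = X_{\<pi> 1} \<otimes> ... \<otimes> X_{\<pi> m}.\<close>
definition perm_op :: "('m::finite \<Rightarrow> 'm) \<Rightarrow> ('m, 'n::finite) tens_op" where
  "perm_op \<pi> = (\<chi> a b. if a = b \<circ> \<pi> then 1 else 0)"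

definition swap_channel ::
  "real \<Rightarrow> ('m \<times> 'm) set \<Rightarrow> ('m \<times> 'm \<Rightarrow> real) \<Rightarrow> ('m::finite, 'n::finite) tens_op \<Rightarrow> ('m, 'n) tens_op" where
  "swap_channel q0 E q X = q0 *\<^sub>R X +
     (\<Sum>e\<in>E. q e *\<^sub>R (perm_op (Transposition.transpose (fst e) (snd e)) ** X ** adjoint_op (perm_op (Transposition.transpose (fst e) (snd e)))))"

text \<open>Sanity check of the convention for U_\<pi> (entry-wise form of the defining property).\<close>
lemma perm_op_conj_tensor_entry:
  fixes \<pi> :: "'m::finite \<Rightarrow> 'm" and Xs :: "'m \<Rightarrow> complex^'n::finite^'n"
  assumes "\<pi> permutes UNIV"
  shows "(\<Prod>k\<in>UNIV. Xs k $ (a \<circ> inv \<pi>) k $ (b \<circ> inv \<pi>) k)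
       = (\<Prod>l\<in>UNIV. Xs (\<pi> l) $ a l $ b l)"
proof -
  have "(\<Prod>k\<in>UNIV. Xs k $ (a \<circ> inv \<pi>) k $ (b \<circ> inv \<pi>) k)
      = (\<Prod>l\<in>UNIV. Xs (\<pi> l) $ (a \<circ> inv \<pi>) (\<pi> l) $ (b \<circ> inv \<pi>) (\<pi> l))"
    using prod.permute[OF assms, of "\<lambda>k. Xs k $ (a \<circ> inv \<pi>) k $ (b \<circ> inv \<pi>) k"]
    by (simp add: comp_def)
  also have "\<dots> = (\<Prod>l\<in>UNIV. Xs (\<pi> l) $ a l $ b l)"
    using permutes_inverses(2)[OF assms] by simp
  finally show ?thesis .
qed

end

theory Submission
  imports Defs
begin

text \<open>Conjugation by a permutation unitary preserves the Hilbert--Schmidt norm, so a fixed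
  point X of the channel is a convex combination of X and operators of the same norm as X.
  By strict convexity of the Euclidean norm each of them equals X, i.e. X commutes with the
  transposition unitaries along the edges. Since the graph is connected, these transpositions
  generate every transposition and hence the whole symmetric group.\<close>

lemma sum_scaleR_eq_imp_eq_of_norm_le:
  fixes x :: "'a::real_inner" and y :: "'b \<Rightarrow> 'a"
  assumes fin: "finite E"
    and q_pos: "\<And>e. e \<in> E \<Longrightarrow> q e > 0"
    and norm_le: "\<And>e. e \<in> E \<Longrightarrow> norm (y e) \<le> norm x"
    and sum_eq: "(\<Sum>e\<in>E. q e *\<^sub>R y e) = (\<Sum>e\<in>E. q e) *\<^sub>R x"
    and e: "e \<in> E"
  shows "y e = x"
proof -
  have inner_le: "inner (y d) x \<le> inner x x" if "d \<in> E" for d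
  proof -
    have "inner (y d) x \<le> norm (y d) * norm x" by (rule norm_cauchy_schwarz)
    also have "\<dots> \<le> norm x * norm x" using norm_le[OF that] by (simp add: mult_right_mono)
    finally show ?thesis by (simp add: dot_square_norm power2_eq_square)
  qed
  have "(\<Sum>d\<in>E. q d * inner (y d) x) = (\<Sum>d\<in>E. q d * inner x x)"
    using arg_cong[OF sum_eq, of "\<lambda>v. inner v x"] by (simp add: inner_sum_left sum_distrib_right)
  hence "(\<Sum>d\<in>E. q d * (inner x x - inner (y d) x)) = 0"
    by (simp add: right_diff_distrib sum_subtractf)
  moreover have "0 \<le> q d * (inner x x - inner (y d) x)" if "d \<in> E" for d
    using q_pos[OF that] inner_le[OF that] by simp
  ultimately have "\<forall>d\<in>E. q d * (inner x x - inner (y d) x) = 0"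
    by (simp add: sum_nonneg_eq_0_iff[OF fin])
  hence inner_eq: "inner (y e) x = inner x x" using q_pos[OF e] e by force
  have "inner (y e) (y e) \<le> inner x x"
    using norm_le[OF e] by (simp add: dot_square_norm power_mono)
  hence "inner (y e - x) (y e - x) \<le> 0"
    using inner_eq by (simp add: inner_diff_left inner_diff_right inner_commute)
  thus ?thesis by (metis antisym inner_ge_zero inner_eq_zero_iff right_minus_eq)
qed

lemma mult_perm_op_entry:
  fixes X :: "('m::finite, 'n::finite) tens_op"
  shows "(X ** perm_op p) $ a $ b = X $ a $ (b \<circ> p)"
  unfolding matrix_matrix_mult_def perm_op_def by (simp add: if_distrib[of "(*) _"] cong: if_cong)

lemma comp_permutes_eq_iff:
  assumes "p permutes UNIV"
  shows "a = c \<circ> p \<longleftrightarrow> c = a \<circ> inv p"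
  using permutes_inv_o[OF assms] by (metis comp_assoc comp_id)

lemma perm_op_mult_entry:
  fixes X :: "('m::finite, 'n::finite) tens_op"
  assumes "p permutes UNIV"
  shows "(perm_op p ** X) $ a $ b = X $ (a \<circ> inv p) $ b"
  unfolding matrix_matrix_mult_def perm_op_def
  by (simp add: comp_permutes_eq_iff[OF assms] if_distrib[of "\<lambda>u. u * _"] cong: if_cong)

lemma perm_op_mult: "perm_op \<sigma> ** perm_op \<tau> = perm_op (\<tau> \<circ> \<sigma>)"
  by (simp add: vec_eq_iff mult_perm_op_entry) (simp add: perm_op_def comp_assoc)

lemma perm_op_id: "perm_op id = mat 1"
  by (simp add: vec_eq_iff perm_op_def mat_def)

lemma adjoint_perm_op:
  assumes "p permutes UNIV"
  shows "adjoint_op (perm_op p) = perm_op (inv p)"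
  by (simp add: vec_eq_iff adjoint_op_def perm_op_def comp_permutes_eq_iff[OF assms] eq_commute)

lemma perm_op_inv_right: "p permutes UNIV \<Longrightarrow> perm_op p ** perm_op (inv p) = mat 1"
  by (simp add: perm_op_mult perm_op_id permutes_inv_o)

lemma perm_op_inv_left: "p permutes UNIV \<Longrightarrow> perm_op (inv p) ** perm_op p = mat 1"
  by (simp add: perm_op_mult perm_op_id permutes_inv_o)

lemma conj_eq_iff_commute:
  fixes U V X :: "'a::comm_ring_1 ^'k^'k"
  assumes UV: "U ** V = mat 1" and VU: "V ** U = mat 1"
  shows "U ** X ** V = X \<longleftrightarrow> U ** X = X ** U"
proof
  assume "U ** X ** V = X"
  hence "U ** X ** V ** U = X ** U" by simp
  thus "U ** X = X ** U" by (simp add: VU flip: matrix_mul_assoc)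
next
  assume "U ** X = X ** U"
  thus "U ** X ** V = X" by (simp add: UV flip: matrix_mul_assoc)
qed

lemma perm_op_conj_eq_iff_commute:
  fixes X :: "('m::finite, 'n::finite) tens_op"
  assumes "p permutes UNIV"
  shows "perm_op p ** X ** adjoint_op (perm_op p) = X \<longleftrightarrow> perm_op p ** X = X ** perm_op p"
  using conj_eq_iff_commute[OF perm_op_inv_right[OF assms] perm_op_inv_left[OF assms]]
  by (simp add: adjoint_perm_op[OF assms])

lemma norm_perm_op_conj:
  fixes X :: "('m::finite, 'n::finite) tens_op"
  assumes p: "p permutes UNIV"
  shows "norm (perm_op p ** X ** adjoint_op (perm_op p)) = norm X"
proof -
  have entry: "(perm_op p ** X ** adjoint_op (perm_op p)) $ a $ b = X $ (a \<circ> inv p) $ (b \<circ> inv p)"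
    for a b
    by (simp add: adjoint_perm_op[OF p] mult_perm_op_entry perm_op_mult_entry[OF p])
  have cancel: "f \<circ> p \<circ> inv p = f" "f \<circ> inv p \<circ> p = f" for f :: "'m \<Rightarrow> 'n"
    by (simp_all add: comp_assoc permutes_inv_o[OF p])
  have reindex: "(\<Sum>a\<in>UNIV. g (a \<circ> inv p)) = (\<Sum>a\<in>UNIV. g a)" for g :: "('m \<Rightarrow> 'n) \<Rightarrow> real"
    by (rule sum.reindex_bij_witness[of _ "\<lambda>a. a \<circ> p" "\<lambda>a. a \<circ> inv p"]) (simp_all add: cancel)
  have "inner (perm_op p ** X ** adjoint_op (perm_op p)) (perm_op p ** X ** adjoint_op (perm_op p))
      = (\<Sum>a\<in>UNIV. \<Sum>b\<in>UNIV. inner (X $ (a \<circ> inv p) $ (b \<circ> inv p)) (X $ (a \<circ> inv p) $ (b \<circ> inv p)))"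
    by (simp add: inner_vec_def entry)
  also have "\<dots> = (\<Sum>a\<in>UNIV. \<Sum>b\<in>UNIV. inner (X $ a $ (b \<circ> inv p)) (X $ a $ (b \<circ> inv p)))"
    by (rule reindex)
  also have "\<dots> = (\<Sum>a\<in>UNIV. \<Sum>b\<in>UNIV. inner (X $ a $ b) (X $ a $ b))"
    by (intro sum.cong refl reindex)
  also have "\<dots> = inner X X"
    by (simp add: inner_vec_def)
  finally show ?thesis by (simp add: norm_eq_sqrt_inner)
qed

lemma transpose_mem_of_rtrancl:
  assumes id_mem: "id \<in> S"
    and comp_mem: "\<And>s t. s \<in> S \<Longrightarrow> t \<in> S \<Longrightarrow> t \<circ> s \<in> S"
    and edge_mem: "\<And>j k. (j, k) \<in> R \<Longrightarrow> Transposition.transpose j k \<in> S"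
    and path: "(j, k) \<in> R\<^sup>*"
  shows "Transposition.transpose j k \<in> S"
  using path
proof (induction rule: rtrancl_induct)
  case base
  then show ?case using id_mem by (simp add: id_def)
next
  case (step k l)
  consider "j = l" | "k = l" | "j = k" | "j \<noteq> l" "k \<noteq> l" "j \<noteq> k" by blast
  then show ?case
  proof cases
    case 4
    then have "Transposition.transpose j k \<circ> Transposition.transpose k l \<circ> Transposition.transpose j k
        = Transposition.transpose j l"
      by (intro transpose_comp_triple) auto
    then show ?thesis
      using comp_mem edge_mem step by metis
  qed (use id_mem step edge_mem in \<open>auto simp: id_def\<close>)
qed

lemma permutes_mem_of_transpositions:
  assumes "finite A" "\<pi> permutes A"
    and id_mem: "id \<in> S"
    and comp_mem: "\<And>s t. s \<in> S \<Longrightarrow> t \<in> S \<Longrightarrow> t \<circ> s \<in> S"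
    and transpose_mem: "\<And>a b. Transposition.transpose a b \<in> S"
  shows "\<pi> \<in> S"
  using assms(2,1)
proof (induction rule: permutes_induct)
  case id
  show ?case by (fact id_mem)
next
  case (swap a b p)
  show ?case by (rule comp_mem[OF swap.IH transpose_mem])
qed

definition commuting_perms :: "('m::finite, 'n::finite) tens_op \<Rightarrow> ('m \<Rightarrow> 'm) set" where
  "commuting_perms X = {p. perm_op p ** X = X ** perm_op p}"

lemma id_mem_commuting_perms: "id \<in> commuting_perms X"
  by (simp add: commuting_perms_def perm_op_id)

lemma comp_mem_commuting_perms:
  assumes "s \<in> commuting_perms X" "t \<in> commuting_perms X"
  shows "t \<circ> s \<in> commuting_perms X"
  using assms unfolding commuting_perms_def by (metis (mono_tags) mem_Collect_eq matrix_mul_assoc perm_op_mult)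

lemma transpose_mem_commuting_perms_of_fixed:
  fixes X :: "('m::finite, 'n::finite) tens_op"
  assumes q_pos: "\<forall>e\<in>E. q e > 0"
    and q_sum: "q0 + (\<Sum>e\<in>E. q e) = 1"
    and fixed: "swap_channel q0 E q X = X"
    and edge: "(j, k) \<in> E"
  shows "Transposition.transpose j k \<in> commuting_perms X"
proof -
  let ?conj = "\<lambda>e. perm_op (Transposition.transpose (fst e) (snd e)) ** X
      ** adjoint_op (perm_op (Transposition.transpose (fst e) (snd e)))"
  have "q0 *\<^sub>R X + (\<Sum>e\<in>E. q e *\<^sub>R ?conj e) = q0 *\<^sub>R X + (\<Sum>e\<in>E. q e) *\<^sub>R X"
    using fixed q_sum by (simp add: swap_channel_def flip: scaleR_add_left)
  then have sum_eq: "(\<Sum>e\<in>E. q e *\<^sub>R ?conj e) = (\<Sum>e\<in>E. q e) *\<^sub>R X"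
    by (rule add_left_imp_eq)
  have "?conj (j, k) = X"
  proof (rule sum_scaleR_eq_imp_eq_of_norm_le[of E q])
    show "norm (?conj e) \<le> norm X" for e
      by (simp add: norm_perm_op_conj[OF permutes_swap_id[OF UNIV_I UNIV_I]])
  qed (use q_pos sum_eq edge in auto)
  then show ?thesis
    by (simp add: commuting_perms_def perm_op_conj_eq_iff_commute[OF permutes_swap_id[OF UNIV_I UNIV_I]])
qed

lemma permutes_mem_commuting_perms_of_connected:
  assumes connected: "\<forall>j k. (j, k) \<in> (E \<union> E\<inverse>)\<^sup>*"
    and edge_mem: "\<And>j k. (j, k) \<in> E \<Longrightarrow> Transposition.transpose j k \<in> commuting_perms X"
    and "\<pi> permutes UNIV"
  shows "\<pi> \<in> commuting_perms X"
proof -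
  have "Transposition.transpose j k \<in> commuting_perms X" if "(j, k) \<in> E \<union> E\<inverse>" for j k
    using that edge_mem by (metis UnE converseD transpose_commute)
  then have "Transposition.transpose j k \<in> commuting_perms X" for j k
    using connected
    by (blast intro: transpose_mem_of_rtrancl id_mem_commuting_perms comp_mem_commuting_perms)
  then show ?thesis
    using permutes_mem_of_transpositions[OF finite \<open>\<pi> permutes UNIV\<close>
        id_mem_commuting_perms comp_mem_commuting_perms] by blast
qed

lemma swap_channel_fixed_of_commuting:
  fixes X :: "('m::finite, 'n::finite) tens_op"
  assumes q_sum: "q0 + (\<Sum>e\<in>E. q e) = 1"
    and transpose_mem: "\<And>j k. Transposition.transpose j k \<in> commuting_perms X"
  shows "swap_channel q0 E q X = X"
proof -
  have conj: "perm_op (Transposition.transpose j k) ** X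
      ** adjoint_op (perm_op (Transposition.transpose j k)) = X" for j k
    using transpose_mem[of j k] perm_op_conj_eq_iff_commute[OF permutes_swap_id[OF UNIV_I UNIV_I], of j k X]
    unfolding commuting_perms_def mem_Collect_eq by blast
  have "swap_channel q0 E q X = q0 *\<^sub>R X + (\<Sum>e\<in>E. q e *\<^sub>R X)"
    by (simp add: swap_channel_def conj)
  also have "\<dots> = X"
    using q_sum by (simp flip: scaleR_add_left scaleR_sum_left)
  finally show ?thesis .
qed

theorem lemma1:
  fixes E :: "('m::finite \<times> 'm) set"
    and q0 :: real and q :: "'m \<times> 'm \<Rightarrow> real"
  assumes n_ge: "CARD('n::finite) \<ge> 2"
    and m_ge: "CARD('m) \<ge> 2"
    and loopfree: "\<forall>(j, k)\<in>E. j \<noteq> k"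
    and undirected: "\<forall>(j, k)\<in>E. (k, j) \<notin> E"
    and connected: "\<forall>j k. (j, k) \<in> (E \<union> E\<inverse>)\<^sup>*"
    and q0_pos: "q0 > 0"
    and q_pos: "\<forall>e\<in>E. q e > 0"
    and q_sum: "q0 + (\<Sum>e\<in>E. q e) = 1"
  shows "{X :: ('m, 'n) tens_op. swap_channel q0 E q X = X} =
         {X. \<forall>\<pi>. \<pi> permutes (UNIV :: 'm set) \<longrightarrow> perm_op \<pi> ** X = X ** perm_op \<pi>}"
proof (intro set_eqI iffI; simp only: mem_Collect_eq)
  fix X :: "('m, 'n) tens_op"
  assume "swap_channel q0 E q X = X"
  then have "Transposition.transpose j k \<in> commuting_perms X" if "(j, k) \<in> E" for j k
    using transpose_mem_commuting_perms_of_fixed q_pos q_sum that by blast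
  then show "\<forall>\<pi>. \<pi> permutes UNIV \<longrightarrow> perm_op \<pi> ** X = X ** perm_op \<pi>"
    using permutes_mem_commuting_perms_of_connected[OF connected]
    unfolding commuting_perms_def by blast
next
  fix X :: "('m, 'n) tens_op"
  assume "\<forall>\<pi>. \<pi> permutes UNIV \<longrightarrow> perm_op \<pi> ** X = X ** perm_op \<pi>"
  then have "Transposition.transpose j k \<in> commuting_perms X" for j k
    by (simp add: commuting_perms_def permutes_swap_id)
  then show "swap_channel q0 E q X = X"
    using swap_channel_fixed_of_commuting[OF q_sum] by blast
qed

end
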